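(* Let $d\ge 2$, $n\ge 1$, and let $h_1,\dots,h_m$ be traceless Hermitian operators on $(\mathbb{C}^d)^{\otimes n}$, each supported on 2 qudits with $\|h_i\|_\infty=1$. For every $U\in\mathrm{SU}(d^n)$, $$\mathrm{Cost}(U)\ \ge\ \frac{1}{8\log(d)}\,\mathcal{C}_r(U),$$ with $\log$ base 2.
   Context: Fix the computational basis $\{|\vec z\rangle\}_{\vec z\in[d]^n}$ of $(\mathbb{C}^d)^{\otimes n}$ and let $\Delta(\rho)=\sum_{\vec z}\langle\vec z|\rho|\vec z\rangle|\vec z\rangle\langle\vec z|$ be the completely dephasing channel. The relative entropy of coherence is $C_r(\rho)=S(\Delta(\rho))-S(\rho)$ with $S(\rho)=-\mathrm{Tr}\rho\log\rho$. The cohering power of a unitary $U$ is $\mathcal{C}_r(U)=\max_{\rho}|C_r(U\rho U^\dagger)-C_r(\rho)|$, the maximum over all density operators on $(\mathbb{C}^d)^{\otimes n}$. The circuit cost of $U$ with respect to $h_1,\dots,h_m$ is $\mathrm{Cost}(U)=\inf\int_0^1\sum_{j=1}^m|r_j(s)|ds$ over continuous $r_j:[0,1]\to\mathbb{R}$ with $U=\mathcal{P}\exp(-i\int_0^1\sum_j r_j(s)h_j\,ds)$, $\mathcal{P}$ denoting path ordering. *)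

theory Defs
  imports "HOL-Analysis.Analysis"
begin

text \<open>n qudits: positions of type 'n (CARD('n) = n), local levels of type 'q (CARD('q) = d).
  Computational basis states are configurations z :: 'n \<Rightarrow> 'q; operators on the
  Hilbert space are matrices indexed by configurations.\<close>

type_synonym ('n, 'q) qmat = "complex ^ ('n \<Rightarrow> 'q) ^ ('n \<Rightarrow> 'q)"

definition cadj :: "complex ^ 'k ^ 'k \<Rightarrow> complex ^ 'k ^ 'k" where
  "cadj A = (\<chi> i j. cnj (A $ j $ i))"

definition hermitian_mat :: "complex ^ 'k ^ 'k \<Rightarrow> bool" where
  "hermitian_mat A \<longleftrightarrow> cadj A = A"

definition unitary_mat :: "complex ^ 'k ^ 'k \<Rightarrow> bool" where
  "unitary_mat U \<longleftrightarrow> U ** cadj U = mat 1 \<and> cadj U ** U = mat 1"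

definition special_unitary :: "complex ^ 'k ^ 'k \<Rightarrow> bool" where
  "special_unitary U \<longleftrightarrow> unitary_mat U \<and> det U = 1"

definition cinner :: "complex ^ 'k \<Rightarrow> complex ^ 'k \<Rightarrow> complex" where
  "cinner v w = (\<Sum>i\<in>UNIV. cnj (v $ i) * w $ i)"

definition density_op :: "complex ^ 'k ^ 'k \<Rightarrow> bool" where
  "density_op \<rho> \<longleftrightarrow> hermitian_mat \<rho> \<and> (\<forall>v. 0 \<le> Re (cinner v (\<rho> *v v))) \<and> trace \<rho> = 1"

definition diag_mat :: "('k \<Rightarrow> complex) \<Rightarrow> complex ^ 'k ^ 'k" where
  "diag_mat f = (\<chi> i j. if i = j then f i else 0)"

definition mat_fun :: "(real \<Rightarrow> real) \<Rightarrow> complex ^ 'k ^ 'k \<Rightarrow> complex ^ 'k ^ 'k" where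
  "mat_fun f A = (THE B. \<exists>V lam. unitary_mat V \<and>
      A = V ** diag_mat (\<lambda>k. complex_of_real (lam k)) ** cadj V \<and>
      B = V ** diag_mat (\<lambda>k. complex_of_real (f (lam k))) ** cadj V)"

definition vn_entropy :: "complex ^ 'k ^ 'k \<Rightarrow> real" where
  "vn_entropy \<rho> = - Re (trace (mat_fun (\<lambda>x. x * log 2 x) \<rho>))"

definition dephase :: "complex ^ 'k ^ 'k \<Rightarrow> complex ^ 'k ^ 'k" where
  "dephase \<rho> = (\<chi> i j. if i = j then \<rho> $ i $ i else 0)"

definition rel_ent_coherence :: "complex ^ 'k ^ 'k \<Rightarrow> real" where
  "rel_ent_coherence \<rho> = vn_entropy (dephase \<rho>) - vn_entropy \<rho>"

definition cohering_power :: "complex ^ 'k ^ 'k \<Rightarrow> real" where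
  "cohering_power U = (SUP \<rho>\<in>{\<rho>. density_op \<rho>}.
       \<bar>rel_ent_coherence (U ** \<rho> ** cadj U) - rel_ent_coherence \<rho>\<bar>)"

definition two_local :: "('n::finite, 'q::finite) qmat \<Rightarrow> bool" where
  "two_local h \<longleftrightarrow> (\<exists>i j (g :: 'q \<times> 'q \<Rightarrow> 'q \<times> 'q \<Rightarrow> complex). i \<noteq> j \<and>
     (\<forall>z w. h $ z $ w = (if (\<forall>k. k \<noteq> i \<and> k \<noteq> j \<longrightarrow> z k = w k)
                          then g (z i, z j) (w i, w j) else 0)))"

definition op_norm :: "complex ^ 'k ^ 'k \<Rightarrow> real" where
  "op_norm A = onorm (\<lambda>v. A *v v)"

text \<open>U = P exp(-i \<integral>_0^1 \<Sum>_j r_j(s) h_j ds): the solution V of V' = -i H(s) V, V(0) = I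
  on [0,1] satisfies V(1) = U.\<close>
definition path_ordered_exp_eq ::
  "nat \<Rightarrow> (nat \<Rightarrow> complex ^ 'k ^ 'k) \<Rightarrow> (nat \<Rightarrow> real \<Rightarrow> real) \<Rightarrow> complex ^ 'k ^ 'k \<Rightarrow> bool" where
  "path_ordered_exp_eq m h r U \<longleftrightarrow> (\<exists>V :: real \<Rightarrow> complex ^ 'k ^ 'k.
      V 0 = mat 1 \<and> V 1 = U \<and>
      (\<forall>s\<in>{0..1}. (V has_vector_derivative
          (mat (- \<i>) ** ((\<Sum>j<m. r j s *\<^sub>R h j) ** V s))) (at s within {0..1})))"

definition circuit_cost :: "nat \<Rightarrow> (nat \<Rightarrow> complex ^ 'k ^ 'k) \<Rightarrow> complex ^ 'k ^ 'k \<Rightarrow> ereal" where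
  "circuit_cost m h U = Inf {ereal (integral {0..1} (\<lambda>s. \<Sum>j<m. \<bar>r j s\<bar>)) | r.
      (\<forall>j<m. continuous_on {0..1} (r j)) \<and> path_ordered_exp_eq m h r U}"

end

theory Submission
  imports Defs "HOL-Real_Asymp.Real_Asymp"
begin

text \<open>Since the von Neumann entropy is unitarily invariant, conjugating \<open>\<rho>\<close> by \<open>U\<close> changes its
  relative entropy of coherence only through the Shannon entropy of the diagonal. Write
  \<open>\<rho> = \<Sum>\<^sub>k |b\<^sub>k\<rangle>\<langle>b\<^sub>k|\<close> and follow \<open>\<psi>\<^sub>k(s) = V(s) b\<^sub>k\<close> along the path \<open>V' = -i H(s) V\<close>,
  \<open>H = \<Sum>\<^sub>j r\<^sub>j h\<^sub>j\<close>. The diagonal probabilities \<open>p\<^sub>z\<close> then change by a balanced current, and the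
  entropy production \<open>- \<Sum>\<^sub>z ln p\<^sub>z p'\<^sub>z\<close> equals \<open>- 2 \<Sum>\<^sub>j r\<^sub>j \<Sum>\<^sub>k Im \<langle>ln p \<cdot> \<psi>\<^sub>k, h\<^sub>j \<psi>\<^sub>k\<rangle>\<close>.
  For a two-local \<open>h\<^sub>j\<close> the part of \<open>ln p\<close> that is constant on the blocks of configurations
  agreeing off the two sites does not contribute, and the remaining part \<open>ln (d\<^sup>2 p\<^sub>z / Q\<^sub>z)\<close>, with
  \<open>Q\<^sub>z\<close> the block total, has \<open>p\<close>-mean square at most \<open>(2 ln d)\<^sup>2 + 1\<close>. Cauchy-Schwarz bounds
  the entropy production by \<open>2 sqrt ((2 ln d)\<^sup>2 + 1) \<Sum>\<^sub>j |r\<^sub>j| \<le> 8 ln d \<Sum>\<^sub>j |r\<^sub>j|\<close>; integrating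
  over the path gives the bound in bits. To stay away from \<open>ln 0\<close> the argument is run for
  \<open>p + e\<close> and \<open>e \<rightarrow> 0\<close> at the end.\<close>

section \<open>Adjoints, unitary and Hermitian matrices\<close>

lemma cadj_nth [simp]: "cadj A $ i $ j = cnj (A $ j $ i)"
  by (simp add: cadj_def)

lemma cadj_cadj [simp]: "cadj (cadj A) = A"
  by (simp add: cadj_def vec_eq_iff)

lemma cadj_mat_one [simp]: "cadj (mat 1 :: complex ^ 'k ^ 'k) = mat 1"
  by (simp add: vec_eq_iff mat_def)

lemma cadj_matrix_mult: "cadj (A ** B) = cadj B ** cadj A"
  by (simp add: vec_eq_iff matrix_matrix_mult_def mult.commute)

lemma unitary_mat_cancel:
  assumes "unitary_mat W"
  shows "W ** cadj W = mat 1" "cadj W ** W = mat 1"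
    "X ** W ** cadj W = X" "X ** cadj W ** W = X"
  using assms unfolding unitary_mat_def
  by (metis matrix_mul_assoc matrix_mul_rid)+

lemma unitary_mat_one: "unitary_mat (mat 1 :: complex ^ 'k ^ 'k)"
  by (simp add: unitary_mat_def)

lemma unitary_mat_cadj: "unitary_mat A \<Longrightarrow> unitary_mat (cadj A)"
  by (simp add: unitary_mat_def)

lemma unitary_mat_mult:
  assumes "unitary_mat A" "unitary_mat B"
  shows "unitary_mat (A ** B)"
  by (simp add: unitary_mat_def cadj_matrix_mult matrix_mul_assoc
      unitary_mat_cancel[OF assms(1)] unitary_mat_cancel[OF assms(2)])

lemma hermitian_mat_cnj_nth: "hermitian_mat A \<Longrightarrow> cnj (A $ j $ i) = A $ i $ j"
  unfolding hermitian_mat_def by (metis cadj_nth)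

lemma hermitian_mat_nth: "hermitian_mat A \<Longrightarrow> A $ j $ i = cnj (A $ i $ j)"
  by (metis hermitian_mat_cnj_nth complex_cnj_cnj)

lemma hermitian_matI: "(\<And>i j. cnj (A $ j $ i) = A $ i $ j) \<Longrightarrow> hermitian_mat A"
  by (simp add: hermitian_mat_def cadj_def vec_eq_iff)

lemma hermitian_mat_diff:
  "hermitian_mat A \<Longrightarrow> hermitian_mat B \<Longrightarrow> hermitian_mat (A - B)"
  by (rule hermitian_matI) (simp add: hermitian_mat_cnj_nth)

lemma hermitian_mat_sum_scaleR:
  assumes "\<And>j. j \<in> A \<Longrightarrow> hermitian_mat (h j)"
  shows "hermitian_mat (\<Sum>j\<in>A. c j *\<^sub>R h j)"
proof (rule hermitian_matI)
  fix z w
  have "cnj ((\<Sum>j\<in>A. c j *\<^sub>R h j) $ w $ z) = (\<Sum>j\<in>A. c j *\<^sub>R cnj (h j $ w $ z))"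
    by (simp add: sum_component)
  also have "\<dots> = (\<Sum>j\<in>A. c j *\<^sub>R h j) $ z $ w"
    using assms by (simp add: sum_component hermitian_mat_cnj_nth cong: sum.cong)
  finally show "cnj ((\<Sum>j\<in>A. c j *\<^sub>R h j) $ w $ z) = (\<Sum>j\<in>A. c j *\<^sub>R h j) $ z $ w" .
qed

lemma diag_mat_matrix_mult_nth: "(diag_mat f ** A) $ i $ j = f i * A $ i $ j"
proof -
  have "(\<Sum>k\<in>UNIV. (if i = k then f i else 0) * A $ k $ j) = (\<Sum>k\<in>UNIV. if i = k then f i * A $ k $ j else 0)"
    by (rule sum.cong) auto
  then show ?thesis by (simp add: matrix_matrix_mult_def diag_mat_def)
qed

lemma matrix_mult_diag_mat_nth: "(A ** diag_mat f) $ i $ j = A $ i $ j * f j"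
proof -
  have "(\<Sum>k\<in>UNIV. A $ i $ k * (if k = j then f k else 0)) = (\<Sum>k\<in>UNIV. if k = j then A $ i $ k * f k else 0)"
    by (rule sum.cong) auto
  then show ?thesis by (simp add: matrix_matrix_mult_def diag_mat_def)
qed

section \<open>Functional calculus and von Neumann entropy\<close>

definition mat_fun_rel :: "(real \<Rightarrow> real) \<Rightarrow> complex ^ 'k ^ 'k \<Rightarrow> complex ^ 'k ^ 'k \<Rightarrow> bool" where
  "mat_fun_rel f A B \<longleftrightarrow> (\<exists>V lam. unitary_mat V \<and>
      A = V ** diag_mat (\<lambda>k. complex_of_real (lam k)) ** cadj V \<and>
      B = V ** diag_mat (\<lambda>k. complex_of_real (f (lam k))) ** cadj V)"

text \<open>Two diagonalisations of the same matrix differ by a unitary \<open>W\<close> that intertwines the two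
  diagonal matrices; entrywise, \<open>W\<close> only connects equal eigenvalues, so it intertwines any
  function of them as well.\<close>
lemma mat_fun_rel_unique:
  assumes "mat_fun_rel f A B1" "mat_fun_rel f A B2"
  shows "B1 = B2"
proof -
  obtain V1 l1 V2 l2 where u1: "unitary_mat V1" and u2: "unitary_mat V2"
    and eq: "V1 ** diag_mat (\<lambda>k. complex_of_real (l1 k)) ** cadj V1 =
             V2 ** diag_mat (\<lambda>k. complex_of_real (l2 k)) ** cadj V2"
    and B1: "B1 = V1 ** diag_mat (\<lambda>k. complex_of_real (f (l1 k))) ** cadj V1"
    and B2: "B2 = V2 ** diag_mat (\<lambda>k. complex_of_real (f (l2 k))) ** cadj V2"
    using assms unfolding mat_fun_rel_def by metis
  define W where "W = cadj V2 ** V1"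
  let ?D1 = "diag_mat (\<lambda>k. complex_of_real (l1 k))"
  let ?D2 = "diag_mat (\<lambda>k. complex_of_real (l2 k))"
  let ?F1 = "diag_mat (\<lambda>k. complex_of_real (f (l1 k)))"
  let ?F2 = "diag_mat (\<lambda>k. complex_of_real (f (l2 k)))"
  have "W ** ?D1 = cadj V2 ** (V1 ** ?D1 ** cadj V1) ** V1"
    by (simp add: W_def matrix_mul_assoc unitary_mat_cancel[OF u1])
  also have "\<dots> = ?D2 ** W"
    by (simp add: eq W_def matrix_mul_assoc unitary_mat_cancel[OF u2])
  finally have comm: "W ** ?D1 = ?D2 ** W" .
  have "W $ a $ b * complex_of_real (f (l1 b)) = complex_of_real (f (l2 a)) * W $ a $ b" for a b
  proof -
    have "W $ a $ b * complex_of_real (l1 b) = complex_of_real (l2 a) * W $ a $ b"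
      using arg_cong[OF comm, of "\<lambda>M. M $ a $ b"]
      by (simp add: diag_mat_matrix_mult_nth matrix_mult_diag_mat_nth)
    then have "W $ a $ b = 0 \<or> l1 b = l2 a" by (auto simp: mult.commute)
    then show ?thesis by auto
  qed
  then have comm_f: "W ** ?F1 = ?F2 ** W"
    by (simp add: vec_eq_iff diag_mat_matrix_mult_nth matrix_mult_diag_mat_nth)
  have "B2 = V2 ** ?F2 ** W ** cadj V1"
    by (simp add: B2 W_def matrix_mul_assoc unitary_mat_cancel[OF u1])
  also have "\<dots> = V2 ** (W ** ?F1) ** cadj V1"
    by (simp add: comm_f matrix_mul_assoc)
  also have "\<dots> = B1"
    by (simp add: B1 W_def matrix_mul_assoc unitary_mat_cancel[OF u2])
  finally show ?thesis ..
qed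

lemma mat_fun_conv_The: "mat_fun f A = (THE B. mat_fun_rel f A B)"
  by (simp add: mat_fun_def mat_fun_rel_def)

lemma mat_fun_eqI: "mat_fun_rel f A B \<Longrightarrow> mat_fun f A = B"
  unfolding mat_fun_conv_The using mat_fun_rel_unique by blast

lemma mat_fun_rel_unitary_conj:
  assumes W: "unitary_mat W" and rel: "mat_fun_rel f A B"
  shows "mat_fun_rel f (W ** A ** cadj W) (W ** B ** cadj W)"
proof -
  obtain V lam where V: "unitary_mat V"
    and A: "A = V ** diag_mat (\<lambda>k. complex_of_real (lam k)) ** cadj V"
    and B: "B = V ** diag_mat (\<lambda>k. complex_of_real (f (lam k))) ** cadj V"
    using rel unfolding mat_fun_rel_def by blast
  show ?thesis
    unfolding mat_fun_rel_def
    by (rule exI[of _ "W ** V"], rule exI[of _ lam])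
       (simp add: A B unitary_mat_mult[OF W V] cadj_matrix_mult matrix_mul_assoc)
qed

text \<open>If \<open>A\<close> is not unitarily diagonalisable, \<open>mat_fun f A\<close> is an unspecified value, but then neither
  is any unitary conjugate of \<open>A\<close>, so the two unspecified values coincide.\<close>
lemma trace_mat_fun_unitary_conj:
  assumes W: "unitary_mat W"
  shows "trace (mat_fun f (W ** A ** cadj W)) = trace (mat_fun f A)"
proof (cases "\<exists>B. mat_fun_rel f A B")
  case True
  then obtain B where B: "mat_fun_rel f A B" by blast
  have "trace (W ** B ** cadj W) = trace (cadj W ** (W ** B))"
    by (rule trace_mul_sym)
  also have "\<dots> = trace B"
    by (simp add: matrix_mul_assoc unitary_mat_cancel[OF W])
  finally have "trace (W ** B ** cadj W) = trace B" .
  then show ?thesis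
    using mat_fun_eqI[OF B] mat_fun_eqI[OF mat_fun_rel_unitary_conj[OF W B]] by simp
next
  case False
  have A: "A = cadj W ** (W ** A ** cadj W) ** cadj (cadj W)"
    by (simp add: matrix_mul_assoc unitary_mat_cancel[OF W])
  have "\<not> mat_fun_rel f (W ** A ** cadj W) B" for B
    using False mat_fun_rel_unitary_conj[OF unitary_mat_cadj[OF W], of f "W ** A ** cadj W" B]
    by (metis A)
  with False have "mat_fun_rel f (W ** A ** cadj W) = mat_fun_rel f A"
    by auto
  then show ?thesis
    by (simp add: mat_fun_conv_The)
qed

lemma vn_entropy_unitary_conj: "unitary_mat W \<Longrightarrow> vn_entropy (W ** A ** cadj W) = vn_entropy A"
  by (simp add: vn_entropy_def trace_mat_fun_unitary_conj)

definition ent :: "real \<Rightarrow> real" where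
  "ent x = - (x * ln x)"

lemma vn_entropy_diag_mat:
  "vn_entropy (diag_mat (\<lambda>k. complex_of_real (p k))) = (\<Sum>k\<in>UNIV. ent (p k)) / ln 2"
proof -
  have "mat_fun_rel (\<lambda>x. x * log 2 x) (diag_mat (\<lambda>k. complex_of_real (p k)))
          (diag_mat (\<lambda>k. complex_of_real (p k * log 2 (p k))))"
    unfolding mat_fun_rel_def
    by (rule exI[of _ "mat 1"], rule exI[of _ p]) (simp add: unitary_mat_one)
  then show ?thesis
    by (simp add: mat_fun_eqI vn_entropy_def trace_def diag_mat_def ent_def log_def
        sum_divide_distrib sum_negf)
qed

section \<open>The sesquilinear form and positive semidefinite matrices\<close>

lemma cinner_add_left: "cinner (x + y) z = cinner x z + cinner y z"
  by (simp add: cinner_def sum.distrib ring_distribs)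

lemma cinner_diff_left: "cinner (x - y) z = cinner x z - cinner y z"
  by (simp add: cinner_def sum_subtractf ring_distribs)

lemma cinner_diff_right: "cinner x (y - z) = cinner x y - cinner x z"
  by (simp add: cinner_def sum_subtractf ring_distribs)

lemma cinner_smult_left: "cinner (t *s x) z = cnj t * cinner x z"
  by (simp add: cinner_def sum_distrib_left mult.assoc)

lemma cinner_smult_right: "cinner x (t *s z) = t * cinner x z"
  by (simp add: cinner_def sum_distrib_left mult_ac)

lemma cinner_axis_left: "cinner (axis a 1) w = w $ a"
proof -
  have "cinner (axis a 1) w = (\<Sum>i\<in>UNIV. if i = a then w $ i else 0)"
    unfolding cinner_def by (rule sum.cong) (auto simp: axis_def)
  then show ?thesis by simp
qed

lemma matrix_vector_mult_axis_nth: "(A *v axis k 1) $ i = A $ i $ k"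
proof -
  have "(A *v axis k 1) $ i = (\<Sum>j\<in>UNIV. if j = k then A $ i $ j else 0)"
    unfolding matrix_vector_mult_def vec_lambda_beta by (rule sum.cong) (auto simp: axis_def)
  then show ?thesis by simp
qed

lemma norm_cinner_le: "cmod (cinner u v) \<le> norm u * norm v"
proof -
  have "cmod (cinner u v) \<le> (\<Sum>i\<in>UNIV. \<bar>cmod (u $ i)\<bar> * \<bar>cmod (v $ i)\<bar>)"
    unfolding cinner_def by (rule order_trans[OF norm_sum]) (simp add: norm_mult)
  also have "\<dots> \<le> L2_set (\<lambda>i. cmod (u $ i)) UNIV * L2_set (\<lambda>i. cmod (v $ i)) UNIV"
    by (rule L2_set_mult_ineq)
  finally show ?thesis by (simp add: norm_vec_def)
qed

lemma cinner_hermitian_swap: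
  assumes "hermitian_mat A"
  shows "cinner x (A *v y) = cnj (cinner y (A *v x))"
proof -
  have "cinner x (A *v y) = (\<Sum>i\<in>UNIV. \<Sum>j\<in>UNIV. cnj (x $ i) * A $ i $ j * y $ j)"
    by (simp add: cinner_def matrix_vector_mult_def sum_distrib_left mult.assoc)
  also have "\<dots> = (\<Sum>j\<in>UNIV. \<Sum>i\<in>UNIV. cnj (x $ i) * A $ i $ j * y $ j)"
    by (rule sum.swap)
  also have "\<dots> = cnj (cinner y (A *v x))"
    by (simp add: cinner_def matrix_vector_mult_def sum_distrib_left
        hermitian_mat_cnj_nth[OF assms] mult_ac)
  finally show ?thesis .
qed

lemma Im_cinner_hermitian: "hermitian_mat A \<Longrightarrow> Im (cinner x (A *v x)) = 0"
  using cinner_hermitian_swap[of A x x] by (metis cnj.simps(2) neg_equal_zero)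

definition psd :: "complex ^ 'k ^ 'k \<Rightarrow> bool" where
  "psd A \<longleftrightarrow> (\<forall>v. 0 \<le> Re (cinner v (A *v v)))"

lemma density_op_iff: "density_op \<rho> \<longleftrightarrow> hermitian_mat \<rho> \<and> psd \<rho> \<and> trace \<rho> = 1"
  by (simp add: density_op_def psd_def)

lemma psd_diag_nonneg: "psd A \<Longrightarrow> 0 \<le> Re (A $ a $ a)"
  unfolding psd_def by (metis cinner_axis_left matrix_vector_mult_axis_nth)

lemma cinner_diff_smult_expand:
  "cinner (v - t *s w) (A *v (v - t *s w)) =
     cinner v (A *v v) - t * cinner v (A *v w) - cnj t * cinner w (A *v v) + cnj t * t * cinner w (A *v w)"
  by (simp add: matrix_vector_mult_diff_distrib vector_scalar_commute cinner_diff_left cinner_diff_right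
      cinner_smult_left cinner_smult_right algebra_simps)

text \<open>Testing positivity on \<open>e\<^sub>c - s y e\<^sub>a\<close> with \<open>y = A\<^sub>a\<^sub>c\<close> and large \<open>s\<close>.\<close>
lemma psd_zero_diag_imp_zero_row:
  assumes h: "hermitian_mat A" and p: "psd A" and z: "A $ a $ a = 0"
  shows "A $ a $ c = 0"
proof (rule ccontr)
  assume nz: "A $ a $ c \<noteq> 0"
  let ?y = "A $ a $ c"
  define s where "s = (Re (A $ c $ c) + 1) / (2 * (cmod ?y)\<^sup>2)"
  have s: "2 * s * (cmod ?y)\<^sup>2 = Re (A $ c $ c) + 1"
    using nz unfolding s_def by (simp add: field_simps)
  define t where "t = complex_of_real s * ?y"
  have y_cnj_y: "?y * cnj ?y = complex_of_real ((cmod ?y)\<^sup>2)"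
    by (metis complex_norm_square of_real_power)
  have "0 \<le> Re (cinner (axis c 1 - t *s axis a 1) (A *v (axis c 1 - t *s axis a 1)))"
    using p unfolding psd_def by blast
  also have "\<dots> = Re (A $ c $ c) - Re (t * cnj ?y) - Re (cnj t * ?y)"
    by (simp add: cinner_diff_smult_expand cinner_axis_left matrix_vector_mult_axis_nth z
        hermitian_mat_nth[OF h, of a c])
  also have "\<dots> = Re (A $ c $ c) - 2 * s * (cmod ?y)\<^sup>2"
    by (simp add: t_def mult.assoc y_cnj_y mult.left_commute[of "cnj ?y"] mult.commute[of "cnj ?y"])
  finally show False using s by linarith
qed

definition outer :: "complex ^ 'k \<Rightarrow> complex ^ 'k ^ 'k" where
  "outer b = (\<chi> i j. b $ i * cnj (b $ j))"

lemma hermitian_mat_outer: "hermitian_mat (outer b)"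
  by (rule hermitian_matI) (simp add: outer_def mult.commute)

lemma cinner_outer: "cinner v (outer b *v v) = cnj (cinner b v) * cinner b v"
  by (simp add: cinner_def outer_def matrix_vector_mult_def sum_distrib_left sum_distrib_right mult_ac)
     (rule sum.swap)

text \<open>One step of a Cholesky factorisation: \<open>b\<close> is the \<open>a\<close>-th column of \<open>A\<close> divided by
  \<open>sqrt A\<^sub>a\<^sub>a\<close>.\<close>
lemma psd_peel_outer:
  assumes h: "hermitian_mat A" and p: "psd A" and a: "A $ a $ a \<noteq> 0"
  obtains b where "psd (A - outer b)" "(A - outer b) $ a $ a = 0"
    "\<And>i. A $ i $ i = 0 \<Longrightarrow> (A - outer b) $ i $ i = 0"
proof
  define c where "c = Re (A $ a $ a)"
  have Aaa: "A $ a $ a = complex_of_real c"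
    using hermitian_mat_nth[OF h, of a a] unfolding c_def by (simp add: complex_eq_iff)
  have "c \<noteq> 0"
    using a Aaa by auto
  then have c: "0 < c"
    using psd_diag_nonneg[OF p, of a] unfolding c_def by linarith
  have sq: "complex_of_real (sqrt c) * complex_of_real (sqrt c) = complex_of_real c"
    using c by (simp flip: of_real_mult)
  define b where "b = (\<chi> i. A $ i $ a / complex_of_real (sqrt c))"
  have outer_b: "outer b $ i $ j = A $ i $ a * A $ a $ j / complex_of_real c" for i j
    using hermitian_mat_cnj_nth[OF h, of j a]
    by (simp add: outer_def b_def sq flip: times_divide_times_eq)
  show "(A - outer b) $ a $ a = 0"
    using c by (simp add: outer_b Aaa)
  show "(A - outer b) $ i $ i = 0" if "A $ i $ i = 0" for i
    using psd_zero_diag_imp_zero_row[OF h p that, of a] that by (simp add: outer_b)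
  show "psd (A - outer b)"
    unfolding psd_def
  proof
    fix v
    define y where "y = (A *v v) $ a"
    have "cinner b v = y / complex_of_real (sqrt c)"
      by (simp add: cinner_def b_def y_def matrix_vector_mult_def hermitian_mat_cnj_nth[OF h]
          sum_divide_distrib mult.commute)
    then have "cinner v ((A - outer b) *v v) = cinner v (A *v v) - cnj y * y / complex_of_real c"
      by (simp add: matrix_vector_mult_diff_rdistrib cinner_diff_right cinner_outer sq
          flip: times_divide_times_eq)
    also have "\<dots> = cinner (v - (y / c) *s axis a 1) (A *v (v - (y / c) *s axis a 1))"
      using c cinner_hermitian_swap[OF h, of v "axis a 1"]
      by (simp add: cinner_diff_smult_expand cinner_axis_left matrix_vector_mult_axis_nth
          Aaa y_def field_simps)
    finally show "0 \<le> Re (cinner v ((A - outer b) *v v))"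
      using p unfolding psd_def by simp
  qed
qed

lemma psd_eq_sum_outer:
  fixes A :: "complex ^ 'k::finite ^ 'k"
  assumes "hermitian_mat A" "psd A"
  obtains K :: nat and b where "A = (\<Sum>k<K. outer (b k))"
proof -
  have "\<exists>(K::nat) b. A = (\<Sum>k<K. outer (b k))"
    if "finite S" "hermitian_mat A" "psd A" "{a. A $ a $ a \<noteq> 0} \<subseteq> S" for S and A :: "complex ^ 'k ^ 'k"
    using that
  proof (induction S arbitrary: A rule: finite_induct)
    case empty
    then have "A = 0"
      using psd_zero_diag_imp_zero_row by (auto simp: vec_eq_iff)
    then show ?case
      by (intro exI[of _ 0]) simp
  next
    case (insert a S)
    show ?case
    proof (cases "A $ a $ a = 0")
      case True
      then show ?thesis
        using insert by blast
    next
      case False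
      obtain b where p: "psd (A - outer b)" and "(A - outer b) $ a $ a = 0"
        and "\<And>i. A $ i $ i = 0 \<Longrightarrow> (A - outer b) $ i $ i = 0"
        using psd_peel_outer[OF insert.prems(1,2) False] by blast
      then have "{i. (A - outer b) $ i $ i \<noteq> 0} \<subseteq> S"
        using insert.prems(3) by blast
      then have "\<exists>(K::nat) b'. A - outer b = (\<Sum>k<K. outer (b' k))"
        by (rule insert.IH[OF hermitian_mat_diff[OF insert.prems(1) hermitian_mat_outer] p])
      then obtain K :: nat and b' where "A - outer b = (\<Sum>k<K. outer (b' k))"
        by blast
      then have "A = (\<Sum>k<Suc K. outer ((b'(K := b)) k))"
        by (simp add: diff_eq_eq)
      then show ?thesis
        by blast
    qed
  qed
  from this[OF finite[of UNIV] assms subset_UNIV] show ?thesis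
    using that by blast
qed

section \<open>Probability currents generated by a two-local Hamiltonian\<close>

definition diag_scale :: "('k \<Rightarrow> real) \<Rightarrow> complex ^ 'k \<Rightarrow> complex ^ 'k" where
  "diag_scale L v = (\<chi> z. complex_of_real (L z) * v $ z)"

lemma diag_scale_add: "diag_scale (\<lambda>z. L z + M z) v = diag_scale L v + diag_scale M v"
  by (simp add: diag_scale_def vec_eq_iff distrib_right)

lemma norm_diag_scale_sq: "(norm (diag_scale L v))\<^sup>2 = (\<Sum>z\<in>UNIV. (L z)\<^sup>2 * (cmod (v $ z))\<^sup>2)"
  by (simp add: norm_vec_def L2_set_def sum_nonneg diag_scale_def norm_mult power_mult_distrib)

text \<open>A weight that is constant on the blocks of \<open>h\<close> commutes with \<open>h\<close>, so \<open>diag C \<cdot> h\<close> is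
  Hermitian.\<close>
lemma Im_cinner_diag_scale_block_const:
  assumes h: "hermitian_mat h" and C: "\<And>z w. h $ z $ w \<noteq> 0 \<Longrightarrow> C z = C w"
  shows "Im (cinner (diag_scale C v) (h *v v)) = 0"
proof -
  have "hermitian_mat (\<chi> z w. complex_of_real (C z) * h $ z $ w)"
  proof (rule hermitian_matI)
    fix z w
    show "cnj ((\<chi> z w. complex_of_real (C z) * h $ z $ w) $ w $ z) =
        (\<chi> z w. complex_of_real (C z) * h $ z $ w) $ z $ w"
      using C[of w z] hermitian_mat_cnj_nth[OF h, of w z] by (cases "h $ w $ z = 0") auto
  qed
  moreover have "cinner (diag_scale C v) (h *v v) = cinner v ((\<chi> z w. complex_of_real (C z) * h $ z $ w) *v v)"
    by (simp add: cinner_def diag_scale_def matrix_vector_mult_def sum_distrib_left mult_ac)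
  ultimately show ?thesis
    by (simp add: Im_cinner_hermitian)
qed

lemma op_norm_mult_le: "norm (h *v v) \<le> op_norm h * norm v"
  unfolding op_norm_def by (rule onorm[OF matrix_vector_mul_bounded_linear])

lemma abs_sum_Im_cinner_diag_scale_le:
  assumes "op_norm h \<le> 1"
  shows "\<bar>\<Sum>k<K. Im (cinner (diag_scale M (\<psi> k)) (h *v \<psi> k))\<bar>
    \<le> sqrt (\<Sum>z\<in>UNIV. (M z)\<^sup>2 * (\<Sum>k<K. (cmod (\<psi> k $ z))\<^sup>2)) * sqrt (\<Sum>z\<in>UNIV. \<Sum>k<K. (cmod (\<psi> k $ z))\<^sup>2)"
proof -
  have "\<bar>Im (cinner (diag_scale M (\<psi> k)) (h *v \<psi> k))\<bar> \<le> norm (diag_scale M (\<psi> k)) * norm (\<psi> k)" for k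
  proof -
    have "norm (h *v \<psi> k) \<le> norm (\<psi> k)"
      using op_norm_mult_le[of h "\<psi> k"] assms mult_right_mono[OF assms norm_ge_zero[of "\<psi> k"]]
      by linarith
    then show ?thesis
      by (meson abs_Im_le_cmod norm_cinner_le mult_left_mono norm_ge_zero order_trans)
  qed
  then have "\<bar>\<Sum>k<K. Im (cinner (diag_scale M (\<psi> k)) (h *v \<psi> k))\<bar>
      \<le> (\<Sum>k<K. norm (diag_scale M (\<psi> k)) * norm (\<psi> k))"
    by (rule order_trans[OF sum_abs sum_mono])
  also have "\<dots> \<le> L2_set (\<lambda>k. norm (diag_scale M (\<psi> k))) {..<K} * L2_set (\<lambda>k. norm (\<psi> k)) {..<K}"
    using L2_set_mult_ineq[of "\<lambda>k. norm (diag_scale M (\<psi> k))" "\<lambda>k. norm (\<psi> k)" "{..<K}"] by simp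
  also have "\<dots> = sqrt (\<Sum>z\<in>UNIV. (M z)\<^sup>2 * (\<Sum>k<K. (cmod (\<psi> k $ z))\<^sup>2)) * sqrt (\<Sum>z\<in>UNIV. \<Sum>k<K. (cmod (\<psi> k $ z))\<^sup>2)"
    unfolding L2_set_def norm_diag_scale_sq
    by (subst (1 2) sum.swap) (simp add: sum_distrib_left norm_vec_def L2_set_def sum_nonneg)
  finally show ?thesis .
qed

definition erase_sites :: "'n \<Rightarrow> 'n \<Rightarrow> ('n \<Rightarrow> 'q) \<Rightarrow> ('n \<Rightarrow> 'q)" where
  "erase_sites i j z = (\<lambda>k. if k = i \<or> k = j then undefined else z k)"

lemma two_localE:
  assumes "two_local h"
  obtains i j where "i \<noteq> j" "\<And>z w. h $ z $ w \<noteq> 0 \<Longrightarrow> erase_sites i j z = erase_sites i j w"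
  using assms unfolding two_local_def erase_sites_def by (metis (full_types))

lemma card_erase_sites_fiber:
  fixes w :: "'n::finite \<Rightarrow> 'q::finite"
  assumes "i \<noteq> j"
  shows "card {z. erase_sites i j z = erase_sites i j w} = CARD('q) * CARD('q)"
proof -
  define \<phi> where "\<phi> = (\<lambda>(a::'q, b::'q). w(i := a, j := b))"
  have "inj \<phi>"
  proof (rule injI)
    fix x y assume "\<phi> x = \<phi> y"
    then have "\<phi> x i = \<phi> y i" "\<phi> x j = \<phi> y j" by auto
    then show "x = y"
      using assms by (auto simp: \<phi>_def split: prod.splits)
  qed
  moreover have "{z. erase_sites i j z = erase_sites i j w} = range \<phi>"
  proof (intro set_eqI iffI)
    fix z assume "z \<in> {z. erase_sites i j z = erase_sites i j w}"
    then have "z k = w k" if "k \<noteq> i" "k \<noteq> j" for k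
      using that by (auto simp: erase_sites_def fun_eq_iff) (metis (full_types))
    then have "z = \<phi> (z i, z j)"
      by (auto simp: \<phi>_def)
    then show "z \<in> range \<phi>" by blast
  qed (auto simp: \<phi>_def erase_sites_def)
  ultimately show ?thesis
    using card_image by (fastforce simp: card_cartesian_product)
qed

lemma sum_sum_fiber:
  fixes R :: "'a::finite \<Rightarrow> 'b" and f :: "'a \<Rightarrow> real"
  assumes "\<And>w. card {z. R z = R w} = N"
  shows "(\<Sum>z\<in>UNIV. \<Sum>w\<in>{w. R w = R z}. f w) = real N * (\<Sum>w\<in>UNIV. f w)"
proof -
  have "(\<Sum>z\<in>UNIV. \<Sum>w\<in>{w. R w = R z}. f w) = (\<Sum>z\<in>UNIV. \<Sum>w\<in>UNIV. if R w = R z then f w else 0)"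
    by (simp add: sum.inter_filter[symmetric])
  also have "\<dots> = (\<Sum>w\<in>UNIV. \<Sum>z\<in>UNIV. if R z = R w then f w else 0)"
    by (subst sum.swap) (simp add: eq_commute)
  also have "\<dots> = (\<Sum>w\<in>UNIV. real N * f w)"
    using assms by (simp add: sum.inter_filter[symmetric])
  finally show ?thesis
    by (simp add: sum_distrib_left)
qed

lemma mult_ln_sq_le_one:
  fixes x :: real
  assumes "0 < x" "x < 1"
  shows "x * (ln x)\<^sup>2 \<le> 1"
proof -
  define y where "y = sqrt x"
  have y: "0 < y" "y < 1" "x = y\<^sup>2"
    using assms by (auto simp: y_def)
  have "ln (1 / (exp 1 * y)) \<le> 1 / (exp 1 * y) - 1"
    using y by (intro ln_le_minus_one) auto
  then have ln_y: "- ln y \<le> 1 / (exp 1 * y)"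
    using y by (simp add: ln_div ln_mult)
  have "(ln x)\<^sup>2 = 4 * (- ln y)\<^sup>2"
    using y by (simp add: ln_mult power2_eq_square algebra_simps)
  also have "\<dots> \<le> 4 * (1 / (exp 1 * y))\<^sup>2"
    using ln_y y by (intro mult_left_mono power_mono) auto
  also have "\<dots> = (4 / (exp 1)\<^sup>2) / x"
    using y by (simp add: power_divide power_mult_distrib)
  also have "\<dots> \<le> 1 / x"
  proof -
    have "2 \<le> exp (1::real)"
      using exp_ge_add_one_self[of 1] by simp
    then have "2\<^sup>2 \<le> (exp (1::real))\<^sup>2"
      by (rule power_mono) simp
    then have "4 \<le> (exp (1::real))\<^sup>2"
      by simp
    then show ?thesis
      using assms by (intro divide_right_mono) auto
  qed
  finally show ?thesis
    using assms by (simp add: field_simps)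
qed

lemma mult_ln_ratio_sq_le:
  fixes p Q D :: real
  assumes "0 < p" "p \<le> Q" "1 \<le> D"
  shows "p * (ln (D * p / Q))\<^sup>2 \<le> p * (ln D)\<^sup>2 + Q / D"
proof (cases "D * p / Q < 1")
  case True
  have "p * (ln (D * p / Q))\<^sup>2 = (Q / D) * ((D * p / Q) * (ln (D * p / Q))\<^sup>2)"
    using assms by (simp add: field_simps)
  also have "\<dots> \<le> Q / D"
    using mult_ln_sq_le_one[OF _ True] assms
    by (intro mult_left_le) (auto intro!: divide_pos_pos)
  finally show ?thesis
    using assms by (simp add: add_increasing)
next
  case False
  have "D * p / Q \<le> D"
    using assms by (simp add: divide_le_eq mult_left_mono)
  then have "(ln (D * p / Q))\<^sup>2 \<le> (ln D)\<^sup>2"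
    using False by (intro power_mono) auto
  then show ?thesis
    using assms by (smt (verit) divide_nonneg_nonneg mult_left_mono)
qed

lemma sum_mult_ln_fiber_ratio_sq_le:
  fixes p :: "'a::finite \<Rightarrow> real" and R :: "'a \<Rightarrow> 'b"
  assumes p: "\<And>z. 0 < p z" and card: "\<And>z. card {y. R y = R z} = N"
  defines "Q z \<equiv> \<Sum>y\<in>{y. R y = R z}. p y"
  shows "(\<Sum>z\<in>UNIV. p z * (ln (real N * p z / Q z))\<^sup>2) \<le> (\<Sum>z\<in>UNIV. p z) * ((ln (real N))\<^sup>2 + 1)"
proof -
  have "p z \<le> Q z" for z
    unfolding Q_def by (rule member_le_sum) (auto intro: less_imp_le p)
  moreover have "1 \<le> real N"
    using card[of undefined] card_0_eq[of "{y. R y = R undefined}"] by fastforce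
  ultimately have "(\<Sum>z\<in>UNIV. p z * (ln (real N * p z / Q z))\<^sup>2)
      \<le> (\<Sum>z\<in>UNIV. p z * (ln (real N))\<^sup>2 + Q z / real N)"
    by (intro sum_mono mult_ln_ratio_sq_le p)
  also have "\<dots> = (\<Sum>z\<in>UNIV. p z) * (ln (real N))\<^sup>2 + (\<Sum>z\<in>UNIV. Q z) / real N"
    by (simp add: sum.distrib sum_distrib_right sum_divide_distrib)
  also have "(\<Sum>z\<in>UNIV. Q z) = real N * (\<Sum>z\<in>UNIV. p z)"
    unfolding Q_def by (rule sum_sum_fiber[OF card])
  finally show ?thesis
    using \<open>1 \<le> real N\<close> by (simp add: algebra_simps)
qed

lemma two_local_current_le:
  fixes h :: "('n::finite, 'q::finite) qmat" and \<psi> :: "nat \<Rightarrow> complex ^ ('n \<Rightarrow> 'q)"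
  assumes h: "hermitian_mat h" "two_local h" "op_norm h \<le> 1"
    and p: "\<And>z. 0 < p z" "\<And>z. (\<Sum>k<K. (cmod (\<psi> k $ z))\<^sup>2) \<le> p z"
  shows "\<bar>\<Sum>k<K. Im (cinner (diag_scale (\<lambda>z. ln (p z)) (\<psi> k)) (h *v \<psi> k))\<bar>
    \<le> sqrt ((\<Sum>z\<in>UNIV. p z) * ((2 * ln (real CARD('q)))\<^sup>2 + 1)) * sqrt (\<Sum>z\<in>UNIV. \<Sum>k<K. (cmod (\<psi> k $ z))\<^sup>2)"
proof -
  obtain i j where ij: "i \<noteq> j"
    and block: "\<And>z w. h $ z $ w \<noteq> 0 \<Longrightarrow> erase_sites i j z = erase_sites i j w"
    using two_localE[OF h(2)] by blast
  define R :: "('n \<Rightarrow> 'q) \<Rightarrow> ('n \<Rightarrow> 'q)" where "R = erase_sites i j"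
  define N where "N = CARD('q) * CARD('q)"
  define Q where "Q z = (\<Sum>y\<in>{y. R y = R z}. p y)" for z
  define M where "M z = ln (real N * p z / Q z)" for z
  have Q: "0 < Q z" for z
    unfolding Q_def using p(1) by (intro sum_pos2[of _ z]) (auto intro: less_imp_le)
  have "ln (p z) = ln (Q z / real N) + M z" for z
    using p(1)[of z] Q[of z] by (simp add: M_def N_def ln_div ln_mult)
  then have "Im (cinner (diag_scale (\<lambda>z. ln (p z)) v) (h *v v)) = Im (cinner (diag_scale M v) (h *v v))" for v
    using Im_cinner_diag_scale_block_const[OF h(1), of "\<lambda>z. ln (Q z / real N)" v] block
    by (simp add: diag_scale_add cinner_add_left R_def Q_def)
  then have "\<bar>\<Sum>k<K. Im (cinner (diag_scale (\<lambda>z. ln (p z)) (\<psi> k)) (h *v \<psi> k))\<bar>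
      \<le> sqrt (\<Sum>z\<in>UNIV. (M z)\<^sup>2 * (\<Sum>k<K. (cmod (\<psi> k $ z))\<^sup>2)) * sqrt (\<Sum>z\<in>UNIV. \<Sum>k<K. (cmod (\<psi> k $ z))\<^sup>2)"
    using abs_sum_Im_cinner_diag_scale_le[OF h(3)] by simp
  also have "(\<Sum>z\<in>UNIV. (M z)\<^sup>2 * (\<Sum>k<K. (cmod (\<psi> k $ z))\<^sup>2)) \<le> (\<Sum>z\<in>UNIV. p z * (M z)\<^sup>2)"
    using p(2) by (intro sum_mono) (metis mult.commute mult_left_mono zero_le_power2)
  also have "\<dots> \<le> (\<Sum>z\<in>UNIV. p z) * ((ln (real N))\<^sup>2 + 1)"
    unfolding M_def Q_def
    by (rule sum_mult_ln_fiber_ratio_sq_le[OF p(1)]) (simp add: R_def N_def card_erase_sites_fiber[OF ij])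
  also have "ln (real N) = 2 * ln (real CARD('q))"
    by (simp add: N_def ln_mult)
  finally show ?thesis
    by (simp add: mult_right_mono sum_nonneg)
qed

section \<open>Entropy of a flow of probability\<close>

lemma ent_has_real_derivative: "0 < x \<Longrightarrow> (ent has_real_derivative - (ln x + 1)) (at x)"
  unfolding ent_def by (auto intro!: derivative_eq_intros)

lemma tendsto_ent_shift:
  assumes "0 \<le> x"
  shows "((\<lambda>e. ent (x + e)) \<longlongrightarrow> ent x) (at_right 0)"
proof (cases "x = 0")
  case True
  have "((\<lambda>e::real. - (e * ln e)) \<longlongrightarrow> 0) (at_right 0)"
    by real_asymp
  then show ?thesis
    using True by (simp add: ent_def)
next
  case False
  then show ?thesis
    using assms unfolding ent_def by (intro tendsto_eq_intros) (auto intro: add_pos_nonneg)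
qed

lemma sum_eq_of_balanced_derivatives:
  fixes p p' :: "'z::finite \<Rightarrow> real \<Rightarrow> real"
  assumes deriv: "\<And>z s. s \<in> {0..1} \<Longrightarrow> (p z has_real_derivative p' z s) (at s within {0..1})"
    and balance: "\<And>s. s \<in> {0..1} \<Longrightarrow> (\<Sum>z\<in>UNIV. p' z s) = 0"
    and s: "s \<in> {0..1}"
  shows "(\<Sum>z\<in>UNIV. p z s) = (\<Sum>z\<in>UNIV. p z 0)"
proof -
  have "((\<lambda>s. \<Sum>z\<in>UNIV. p z s) has_vector_derivative 0) (at t within {0..1})" if "t \<in> {0..1}" for t
    using DERIV_sum[of UNIV "\<lambda>s z. p z s" "\<lambda>z. p' z t", OF deriv[OF that]] balance[OF that]
    by (simp add: has_real_derivative_iff_has_vector_derivative)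
  then obtain c where "\<And>t. t \<in> {0..1} \<Longrightarrow> (\<Sum>z\<in>UNIV. p z t) = c"
    using has_vector_derivative_zero_constant[OF convex_real_interval(5)] by blast
  then show ?thesis
    using s by simp
qed

text \<open>As the flow is balanced, the derivative of the total entropy is \<open>- \<Sum>\<^sub>z ln (p\<^sub>z + e) p'\<^sub>z\<close>.\<close>
lemma sum_ent_shift_variation_le:
  fixes p p' :: "'z::finite \<Rightarrow> real \<Rightarrow> real"
  assumes nonneg: "\<And>z s. s \<in> {0..1} \<Longrightarrow> 0 \<le> p z s"
    and deriv: "\<And>z s. s \<in> {0..1} \<Longrightarrow> (p z has_real_derivative p' z s) (at s within {0..1})"
    and balance: "\<And>s. s \<in> {0..1} \<Longrightarrow> (\<Sum>z\<in>UNIV. p' z s) = 0"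
    and e: "0 < e"
    and rate: "\<And>s. s \<in> {0..1} \<Longrightarrow> \<bar>\<Sum>z\<in>UNIV. ln (p z s + e) * p' z s\<bar> \<le> g s"
    and g: "(g has_integral I) {0..1}"
  shows "\<bar>(\<Sum>z\<in>UNIV. ent (p z 1 + e)) - (\<Sum>z\<in>UNIV. ent (p z 0 + e))\<bar> \<le> I"
proof -
  define G' where "G' s = - (\<Sum>z\<in>UNIV. ln (p z s + e) * p' z s)" for s
  have "((\<lambda>s. \<Sum>z\<in>UNIV. ent (p z s + e)) has_vector_derivative G' s) (at s within {0..1})"
    if s: "s \<in> {0..1}" for s
  proof -
    have "((\<lambda>s. p z s + e) has_real_derivative p' z s) (at s within {0..1})" for z
      using deriv[OF s, of z] by (auto intro!: derivative_eq_intros)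
    then have "((\<lambda>s. ent (p z s + e)) has_real_derivative - (ln (p z s + e) + 1) * p' z s) (at s within {0..1})" for z
      using DERIV_chain2[OF ent_has_real_derivative] nonneg[OF s, of z] e by (metis add_nonneg_pos)
    then have "((\<lambda>s. \<Sum>z\<in>UNIV. ent (p z s + e)) has_real_derivative
        (\<Sum>z\<in>UNIV. - (ln (p z s + e) + 1) * p' z s)) (at s within {0..1})"
      by (rule DERIV_sum)
    moreover have "(\<Sum>z\<in>UNIV. - (ln (p z s + e) + 1) * p' z s) = G' s"
      using balance[OF s] by (simp add: G'_def left_diff_distrib sum_subtractf sum_negf)
    ultimately show ?thesis
      by (simp add: has_real_derivative_iff_has_vector_derivative)
  qed
  then have ftc: "(G' has_integral (\<Sum>z\<in>UNIV. ent (p z 1 + e)) - (\<Sum>z\<in>UNIV. ent (p z 0 + e))) {0..1}"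
    by (intro fundamental_theorem_of_calculus) auto
  have G': "\<bar>G' s\<bar> \<le> g s" if "s \<in> {0..1}" for s
    using rate[OF that] by (simp add: G'_def)
  have "(\<Sum>z\<in>UNIV. ent (p z 1 + e)) - (\<Sum>z\<in>UNIV. ent (p z 0 + e)) \<le> I"
    by (rule has_integral_le[OF ftc g]) (use G' in force)
  moreover have "- I \<le> (\<Sum>z\<in>UNIV. ent (p z 1 + e)) - (\<Sum>z\<in>UNIV. ent (p z 0 + e))"
    by (rule has_integral_le[OF has_integral_neg[OF g] ftc]) (use G' in force)
  ultimately show ?thesis
    by linarith
qed

lemma sum_ent_variation_le:
  fixes p p' :: "'z::finite \<Rightarrow> real \<Rightarrow> real"
  assumes nonneg: "\<And>z s. s \<in> {0..1} \<Longrightarrow> 0 \<le> p z s"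
    and deriv: "\<And>z s. s \<in> {0..1} \<Longrightarrow> (p z has_real_derivative p' z s) (at s within {0..1})"
    and balance: "\<And>s. s \<in> {0..1} \<Longrightarrow> (\<Sum>z\<in>UNIV. p' z s) = 0"
    and rate: "\<And>s e. s \<in> {0..1} \<Longrightarrow> 0 < e \<Longrightarrow> \<bar>\<Sum>z\<in>UNIV. ln (p z s + e) * p' z s\<bar> \<le> c e * g s"
    and g: "(g has_integral I) {0..1}"
    and c: "(c \<longlongrightarrow> c0) (at_right 0)"
  shows "\<bar>(\<Sum>z\<in>UNIV. ent (p z 1)) - (\<Sum>z\<in>UNIV. ent (p z 0))\<bar> \<le> c0 * I"
proof (rule tendsto_le[OF trivial_limit_at_right_real tendsto_mult_right[OF c]])
  show "((\<lambda>e. \<bar>(\<Sum>z\<in>UNIV. ent (p z 1 + e)) - (\<Sum>z\<in>UNIV. ent (p z 0 + e))\<bar>)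
      \<longlongrightarrow> \<bar>(\<Sum>z\<in>UNIV. ent (p z 1)) - (\<Sum>z\<in>UNIV. ent (p z 0))\<bar>) (at_right 0)"
    using nonneg by (intro tendsto_intros tendsto_ent_shift) auto
  show "\<forall>\<^sub>F e in at_right 0. \<bar>(\<Sum>z\<in>UNIV. ent (p z 1 + e)) - (\<Sum>z\<in>UNIV. ent (p z 0 + e))\<bar> \<le> c e * I"
    using eventually_at_right_less[of "0::real"]
  proof eventually_elim
    case (elim e)
    then show ?case
      by (intro sum_ent_shift_variation_le[OF nonneg deriv balance _ rate has_integral_mult_right[OF g]])
        auto
  qed
qed

section \<open>Dephased populations along a Schroedinger evolution\<close>

lemma has_vector_derivative_cmod_sq:
  fixes f :: "real \<Rightarrow> complex"
  assumes "(f has_vector_derivative f') (at s within S)"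
  shows "((\<lambda>s. (cmod (f s))\<^sup>2) has_real_derivative 2 * Re (cnj (f s) * f')) (at s within S)"
proof -
  have "((\<lambda>s. f s * cnj (f s)) has_vector_derivative f s * cnj f' + f' * cnj (f s)) (at s within S)"
    by (rule has_vector_derivative_mult[OF assms bounded_linear.has_vector_derivative[OF bounded_linear_cnj assms]])
  then have "((\<lambda>s. Re (f s * cnj (f s))) has_vector_derivative Re (f s * cnj f' + f' * cnj (f s))) (at s within S)"
    by (rule bounded_linear.has_vector_derivative[OF bounded_linear_Re])
  moreover have "(\<lambda>s. Re (f s * cnj (f s))) = (\<lambda>s. (cmod (f s))\<^sup>2)"
    by (rule ext) (metis Re_complex_of_real complex_norm_square)
  ultimately show ?thesis
    by (simp add: has_real_derivative_iff_has_vector_derivative mult_ac)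
qed

lemma bounded_linear_matrix_vector_mult_left: "bounded_linear (\<lambda>A::complex ^ 'k ^ 'k. A *v b)"
proof -
  have "linear (\<lambda>A::complex ^ 'k ^ 'k. A *v b)"
    by (rule linearI) (simp_all add: vec_eq_iff matrix_vector_mult_def scaleR_sum_right sum.distrib distrib_right)
  then show ?thesis
    by (simp add: linear_conv_bounded_linear)
qed

lemma mat_matrix_vector_mult: "mat c *v x = c *s x"
proof -
  have "(mat c *v x) $ i = (\<Sum>j\<in>UNIV. if j = i then c * x $ j else 0)" for i
    unfolding matrix_vector_mult_def mat_def vec_lambda_beta by (rule sum.cong) auto
  then show ?thesis
    by (simp add: vec_eq_iff)
qed

lemma schroedinger_component_has_vector_derivative:
  fixes V :: "real \<Rightarrow> complex ^ 'k ^ 'k"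
  assumes "(V has_vector_derivative (mat (- \<i>) ** (H ** V s))) (at s within S)"
  shows "((\<lambda>s. (V s *v b) $ z) has_vector_derivative - \<i> * (H *v (V s *v b)) $ z) (at s within S)"
proof -
  have "((\<lambda>s. (V s *v b) $ z) has_vector_derivative ((mat (- \<i>) ** (H ** V s)) *v b) $ z) (at s within S)"
    by (rule bounded_linear.has_vector_derivative[OF bounded_linear_vec_nth
          bounded_linear.has_vector_derivative[OF bounded_linear_matrix_vector_mult_left assms]])
  then show ?thesis
    by (simp add: mat_matrix_vector_mult flip: matrix_vector_mul_assoc)
qed

lemma population_has_real_derivative:
  fixes V :: "real \<Rightarrow> complex ^ 'k ^ 'k"
  assumes "(V has_vector_derivative (mat (- \<i>) ** (H ** V s))) (at s within S)"
  shows "((\<lambda>s. \<Sum>k<K. (cmod ((V s *v b k) $ z))\<^sup>2) has_real_derivative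
      2 * (\<Sum>k<K. Im (cnj ((V s *v b k) $ z) * (H *v (V s *v b k)) $ z))) (at s within S)"
proof -
  have "((\<lambda>s. (cmod ((V s *v b k) $ z))\<^sup>2) has_real_derivative
      2 * Im (cnj ((V s *v b k) $ z) * (H *v (V s *v b k)) $ z)) (at s within S)" for k
    using has_vector_derivative_cmod_sq[OF schroedinger_component_has_vector_derivative[OF assms]]
    by (simp add: mult.left_commute[of _ "\<i>"])
  then show ?thesis
    by (simp add: sum_distrib_left DERIV_sum)
qed

lemma sum_weighted_population_current:
  "(\<Sum>z\<in>UNIV. L z * (2 * (\<Sum>k<K. Im (cnj (\<psi> k $ z) * (H *v \<psi> k) $ z))))
    = 2 * (\<Sum>k<K. Im (cinner (diag_scale L (\<psi> k)) (H *v \<psi> k)))"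
  by (simp add: cinner_def diag_scale_def Im_sum sum_distrib_left mult_ac sum.swap[of _ UNIV])

lemma hamiltonian_current_le:
  fixes h :: "nat \<Rightarrow> ('n::finite, 'q::finite) qmat" and \<psi> :: "nat \<Rightarrow> complex ^ ('n \<Rightarrow> 'q)"
  assumes h: "\<And>j. j < m \<Longrightarrow> hermitian_mat (h j)" "\<And>j. j < m \<Longrightarrow> two_local (h j)"
      "\<And>j. j < m \<Longrightarrow> op_norm (h j) \<le> 1"
    and p: "\<And>z. 0 < p z" "\<And>z. (\<Sum>k<K. (cmod (\<psi> k $ z))\<^sup>2) \<le> p z"
    and \<psi>: "(\<Sum>z\<in>UNIV. \<Sum>k<K. (cmod (\<psi> k $ z))\<^sup>2) = 1"
  shows "\<bar>\<Sum>k<K. Im (cinner (diag_scale (\<lambda>z. ln (p z)) (\<psi> k)) ((\<Sum>j<m. r j *\<^sub>R h j) *v \<psi> k))\<bar>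
    \<le> sqrt ((\<Sum>z\<in>UNIV. p z) * ((2 * ln (real CARD('q)))\<^sup>2 + 1)) * (\<Sum>j<m. \<bar>r j\<bar>)"
proof -
  define T where "T j = (\<Sum>k<K. Im (cinner (diag_scale (\<lambda>z. ln (p z)) (\<psi> k)) (h j *v \<psi> k)))" for j
  have "(\<Sum>k<K. Im (cinner (diag_scale (\<lambda>z. ln (p z)) (\<psi> k)) ((\<Sum>j<m. r j *\<^sub>R h j) *v \<psi> k)))
      = (\<Sum>j<m. r j * T j)"
    by (simp add: T_def matrix_vector_mult_def sum_component vec_eq_iff scaleR_sum_right Im_sum
        cinner_def sum_distrib_left sum.swap[of _ "{..<m}"] mult_ac)
  also have "\<bar>\<dots>\<bar> \<le> (\<Sum>j<m. \<bar>r j\<bar> * sqrt ((\<Sum>z\<in>UNIV. p z) * ((2 * ln (real CARD('q)))\<^sup>2 + 1)))"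
    using two_local_current_le[OF h p, unfolded \<psi>]
    by (intro order_trans[OF sum_abs sum_mono]) (auto simp: abs_mult T_def intro: mult_left_mono)
  finally show ?thesis
    by (simp add: sum_distrib_right mult.commute)
qed

lemma dephased_entropy_change_le:
  fixes V :: "real \<Rightarrow> ('n::finite, 'q::finite) qmat" and h :: "nat \<Rightarrow> ('n, 'q) qmat"
    and b :: "nat \<Rightarrow> complex ^ ('n \<Rightarrow> 'q)"
  assumes h: "\<And>j. j < m \<Longrightarrow> hermitian_mat (h j)" "\<And>j. j < m \<Longrightarrow> two_local (h j)"
      "\<And>j. j < m \<Longrightarrow> op_norm (h j) \<le> 1"
    and r: "\<And>j. j < m \<Longrightarrow> continuous_on {0..1} (r j)"
    and V0: "V 0 = mat 1"
    and V': "\<And>s. s \<in> {0..1} \<Longrightarrow>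
      (V has_vector_derivative (mat (- \<i>) ** ((\<Sum>j<m. r j s *\<^sub>R h j) ** V s))) (at s within {0..1})"
    and b: "(\<Sum>z\<in>UNIV. \<Sum>k<K. (cmod (b k $ z))\<^sup>2) = 1"
  shows "\<bar>(\<Sum>z\<in>UNIV. ent (\<Sum>k<K. (cmod ((V 1 *v b k) $ z))\<^sup>2)) - (\<Sum>z\<in>UNIV. ent (\<Sum>k<K. (cmod (b k $ z))\<^sup>2))\<bar>
    \<le> 2 * sqrt ((2 * ln (real CARD('q)))\<^sup>2 + 1) * integral {0..1} (\<lambda>s. \<Sum>j<m. \<bar>r j s\<bar>)"
proof -
  define H where "H s = (\<Sum>j<m. r j s *\<^sub>R h j)" for s
  define \<psi> where "\<psi> k s = V s *v b k" for k s
  define p where "p z s = (\<Sum>k<K. (cmod (\<psi> k s $ z))\<^sup>2)" for z s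
  define p' where "p' z s = 2 * (\<Sum>k<K. Im (cnj (\<psi> k s $ z) * (H s *v \<psi> k s) $ z))" for z s
  define c where "c e = 2 * sqrt ((1 + e * real CARD('n \<Rightarrow> 'q)) * ((2 * ln (real CARD('q)))\<^sup>2 + 1))"
    for e :: real
  have p_nonneg: "0 \<le> p z s" for z s
    by (simp add: p_def sum_nonneg)
  have deriv: "(p z has_real_derivative p' z s) (at s within {0..1})" if "s \<in> {0..1}" for z s
    unfolding p_def p'_def \<psi>_def H_def by (rule population_has_real_derivative[OF V'[OF that]])
  have current: "(\<Sum>z\<in>UNIV. L z * p' z s) = 2 * (\<Sum>k<K. Im (cinner (diag_scale L (\<psi> k s)) (H s *v \<psi> k s)))"
    for L s
    unfolding p'_def by (rule sum_weighted_population_current)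
  have "hermitian_mat (H s)" for s
    unfolding H_def by (intro hermitian_mat_sum_scaleR h) simp
  then have balance: "(\<Sum>z\<in>UNIV. p' z s) = 0" for s
    using current[of "\<lambda>_. 1" s] by (simp add: diag_scale_def Im_cinner_hermitian)
  have total: "(\<Sum>z\<in>UNIV. p z s) = 1" if "s \<in> {0..1}" for s
    using sum_eq_of_balanced_derivatives[OF deriv balance that] b by (simp add: p_def \<psi>_def V0)
  have rate: "\<bar>\<Sum>z\<in>UNIV. ln (p z s + e) * p' z s\<bar> \<le> c e * (\<Sum>j<m. \<bar>r j s\<bar>)"
    if "s \<in> {0..1}" "0 < e" for s e :: real
  proof -
    have "(\<Sum>z\<in>UNIV. p z s + e) = 1 + e * real CARD('n \<Rightarrow> 'q)"
      using total[OF that(1)] by (simp add: sum.distrib)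
    then show ?thesis
      using hamiltonian_current_le[where m=m and h=h and p="\<lambda>z. p z s + e" and \<psi>="\<lambda>k. \<psi> k s"
          and K=K and r="\<lambda>j. r j s", OF h]
        current[of "\<lambda>z. ln (p z s + e)" s] total[OF that(1)] p_nonneg that(2)
      by (simp add: c_def H_def p_def add_nonneg_pos)
  qed
  have "((\<lambda>s. \<Sum>j<m. \<bar>r j s\<bar>) has_integral integral {0..1} (\<lambda>s. \<Sum>j<m. \<bar>r j s\<bar>)) {0..1}"
    using r by (intro integrable_integral integrable_continuous_interval continuous_intros) auto
  moreover have "(c \<longlongrightarrow> c 0) (at_right 0)"
    unfolding c_def by (intro tendsto_intros)
  ultimately have "\<bar>(\<Sum>z\<in>UNIV. ent (p z 1)) - (\<Sum>z\<in>UNIV. ent (p z 0))\<bar>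
      \<le> c 0 * integral {0..1} (\<lambda>s. \<Sum>j<m. \<bar>r j s\<bar>)"
    by (intro sum_ent_variation_le[OF p_nonneg deriv balance rate]) auto
  then show ?thesis
    by (simp add: c_def p_def \<psi>_def V0)
qed

section \<open>Cohering power\<close>

lemma matrix_add_rdistrib: "(A + B) ** C = A ** C + B ** C"
  by (simp add: vec_eq_iff matrix_matrix_mult_def sum.distrib distrib_right)

lemma unitary_conj_sum_outer:
  fixes K :: nat
  shows "U ** (\<Sum>k<K. outer (b k)) ** cadj U = (\<Sum>k<K. outer (U *v b k))"
proof (induction K)
  case (Suc K)
  have "U ** outer (b K) ** cadj U = outer (U *v b K)"
    by (simp add: vec_eq_iff matrix_matrix_mult_def outer_def matrix_vector_mult_def
        sum_distrib_left sum_distrib_right mult_ac)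
  with Suc show ?case
    by (simp add: matrix_add_ldistrib matrix_add_rdistrib)
qed simp

lemma dephase_sum_outer:
  "dephase (\<Sum>k<K. outer (b k)) = diag_mat (\<lambda>z. complex_of_real (\<Sum>k<K. (cmod (b k $ z))\<^sup>2))"
  by (simp add: dephase_def diag_mat_def vec_eq_iff sum_component outer_def flip: complex_norm_square)

lemma trace_sum_outer:
  "trace (\<Sum>k<K. outer (b k)) = complex_of_real (\<Sum>z\<in>UNIV. \<Sum>k<K. (cmod (b k $ z))\<^sup>2)"
  by (simp add: trace_def sum_component outer_def flip: complex_norm_square)

lemma density_op_outer_axis: "density_op (outer (axis a 1))"
proof -
  have "trace (outer (axis a 1)) = (\<Sum>i\<in>UNIV. if i = a then 1 else 0)"
    unfolding trace_def outer_def axis_def by (rule sum.cong) auto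
  then show ?thesis
    by (simp add: density_op_iff psd_def hermitian_mat_outer cinner_outer complex_mult_cnj mult.commute)
qed

lemma rel_ent_coherence_unitary_conj_sum_outer:
  fixes K :: nat
  assumes "unitary_mat U"
  shows "rel_ent_coherence (U ** (\<Sum>k<K. outer (b k)) ** cadj U) - rel_ent_coherence (\<Sum>k<K. outer (b k))
    = ((\<Sum>z\<in>UNIV. ent (\<Sum>k<K. (cmod ((U *v b k) $ z))\<^sup>2))
        - (\<Sum>z\<in>UNIV. ent (\<Sum>k<K. (cmod (b k $ z))\<^sup>2))) / ln 2"
  unfolding rel_ent_coherence_def vn_entropy_unitary_conj[OF assms]
  unfolding unitary_conj_sum_outer dephase_sum_outer vn_entropy_diag_mat
  by (simp add: diff_divide_distrib)

lemma sqrt_double_ln_sq_add_one_le: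
  fixes d :: real
  assumes "2 \<le> d"
  shows "sqrt ((2 * ln d)\<^sup>2 + 1) \<le> 4 * ln d"
proof -
  have "1 / 2 \<le> ln (2::real)"
    using ln_le_minus_one[of "1 / 2 :: real"] by (simp add: ln_div)
  also have "\<dots> \<le> ln d"
    using assms by simp
  finally have l: "1 / 2 \<le> ln d" .
  then have "1 / 4 \<le> ln d * ln d"
    using mult_mono[OF l l] by simp
  then have "sqrt ((2 * ln d)\<^sup>2 + 1) \<le> sqrt ((4 * ln d)\<^sup>2)"
    by (intro real_sqrt_le_mono) (simp add: power2_eq_square)
  also have "\<dots> = 4 * ln d"
    using l by (subst real_sqrt_abs) simp
  finally show ?thesis .
qed

lemma rel_ent_coherence_change_le:
  fixes h :: "nat \<Rightarrow> ('n::finite, 'q::finite) qmat" and U \<rho> :: "('n, 'q) qmat"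
  assumes q: "CARD('q) \<ge> 2"
    and h: "\<And>j. j < m \<Longrightarrow> hermitian_mat (h j)" "\<And>j. j < m \<Longrightarrow> two_local (h j)"
      "\<And>j. j < m \<Longrightarrow> op_norm (h j) \<le> 1"
    and U: "unitary_mat U" and r: "\<And>j. j < m \<Longrightarrow> continuous_on {0..1} (r j)"
    and path: "path_ordered_exp_eq m h r U"
    and \<rho>: "density_op \<rho>"
  shows "\<bar>rel_ent_coherence (U ** \<rho> ** cadj U) - rel_ent_coherence \<rho>\<bar>
    \<le> 8 * log 2 (real CARD('q)) * integral {0..1} (\<lambda>s. \<Sum>j<m. \<bar>r j s\<bar>)"
proof -
  obtain V where V0: "V 0 = mat 1" and V1: "V 1 = U"
    and V': "\<And>s. s \<in> {0..1} \<Longrightarrow>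
      (V has_vector_derivative (mat (- \<i>) ** ((\<Sum>j<m. r j s *\<^sub>R h j) ** V s))) (at s within {0..1})"
    using path unfolding path_ordered_exp_eq_def by blast
  obtain K :: nat and b where \<rho>_eq: "\<rho> = (\<Sum>k<K. outer (b k))"
    using psd_eq_sum_outer \<rho> unfolding density_op_iff by blast
  have "(\<Sum>z\<in>UNIV. \<Sum>k<K. (cmod (b k $ z))\<^sup>2) = 1"
    using \<rho> unfolding density_op_iff \<rho>_eq trace_sum_outer by (metis Re_complex_of_real one_complex.sel(1))
  note change = dephased_entropy_change_le[OF h r V0 V' this, unfolded V1]
  define I where "I = integral {0..1} (\<lambda>s. \<Sum>j<m. \<bar>r j s\<bar>)"
  have "0 \<le> I"
    unfolding I_def using r
    by (intro integral_nonneg integrable_continuous_interval continuous_intros sum_nonneg) auto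
  have "\<bar>rel_ent_coherence (U ** \<rho> ** cadj U) - rel_ent_coherence \<rho>\<bar>
      \<le> 2 * sqrt ((2 * ln (real CARD('q)))\<^sup>2 + 1) * I / ln 2"
    using change by (simp add: \<rho>_eq rel_ent_coherence_unitary_conj_sum_outer[OF U] I_def divide_right_mono)
  also have "\<dots> \<le> 2 * (4 * ln (real CARD('q))) * I / ln 2"
    using sqrt_double_ln_sq_add_one_le[of "real CARD('q)"] q \<open>0 \<le> I\<close>
    by (intro divide_right_mono mult_right_mono mult_left_mono) auto
  also have "\<dots> = 8 * log 2 (real CARD('q)) * I"
    by (simp add: log_def)
  finally show ?thesis
    unfolding I_def .
qed

lemma cohering_power_le:
  fixes h :: "nat \<Rightarrow> ('n::finite, 'q::finite) qmat" and U :: "('n, 'q) qmat"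
  assumes q: "CARD('q) \<ge> 2"
    and h: "\<And>j. j < m \<Longrightarrow> hermitian_mat (h j)" "\<And>j. j < m \<Longrightarrow> two_local (h j)"
      "\<And>j. j < m \<Longrightarrow> op_norm (h j) \<le> 1"
    and U: "unitary_mat U" and r: "\<And>j. j < m \<Longrightarrow> continuous_on {0..1} (r j)"
    and path: "path_ordered_exp_eq m h r U"
  shows "cohering_power U \<le> 8 * log 2 (real CARD('q)) * integral {0..1} (\<lambda>s. \<Sum>j<m. \<bar>r j s\<bar>)"
  unfolding cohering_power_def
  using density_op_outer_axis rel_ent_coherence_change_le[OF q h U r path]
  by (intro cSUP_least) auto

theorem mainTheorem3:
  fixes m :: nat
    and h :: "nat \<Rightarrow> ('n::finite, 'q::finite) qmat"
    and U :: "('n, 'q) qmat"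
  assumes "CARD('q) \<ge> 2"
    and "\<And>j. j < m \<Longrightarrow> hermitian_mat (h j)"
    and "\<And>j. j < m \<Longrightarrow> trace (h j) = 0"
    and "\<And>j. j < m \<Longrightarrow> two_local (h j)"
    and "\<And>j. j < m \<Longrightarrow> op_norm (h j) = 1"
    and "special_unitary U"
  shows "circuit_cost m h U \<ge> ereal (cohering_power U / (8 * log 2 (real CARD('q))))"
  unfolding circuit_cost_def
proof (rule Inf_greatest, clarify)
  fix r
  assume r: "\<forall>j<m. continuous_on {0..1} (r j)" and path: "path_ordered_exp_eq m h r U"
  have "unitary_mat U"
    using assms(6) by (simp add: special_unitary_def)
  then have "cohering_power U \<le> 8 * log 2 (real CARD('q)) * integral {0..1} (\<lambda>s. \<Sum>j<m. \<bar>r j s\<bar>)"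
    using r assms(5) by (intro cohering_power_le[OF assms(1,2,4) _ _ _ path]) simp_all
  moreover have "0 < log 2 (real CARD('q))"
    using assms(1) by simp
  ultimately show "ereal (cohering_power U / (8 * log 2 (real CARD('q))))
      \<le> ereal (integral {0..1} (\<lambda>s. \<Sum>j<m. \<bar>r j s\<bar>))"
    by (simp add: divide_le_eq mult.commute)
qed

end
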